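(* Let $w(x)=\sup_{\tau}\limsup_{T\to\infty}\mathbb E^x\{\int_0^{\tau\wedge T}f(X_s)\,ds+g(X_{\tau\wedge T})\}$. If $\mu(f)>0$, then $w(x)=\infty$ for all $x\in E$ and it is optimal to take $\tau=\infty$, $\mathbb P^x$-a.s., for every $x\in E$.
   Context: $E$ is a locally compact separable metric space in which every closed ball is compact. $(X_t)$ is a right-continuous time-homogeneous Markov process on $E$ with laws $\mathbb P^x$, expectations $\mathbb E^x$, transition probabilities $P_t(x,\cdot)$, which is ergodic: there is a unique probability measure $\mu$ with $\lim_{t\to\infty}\|P_t(x,\cdot)-\mu\|_{TV}=0$ for all $x$. $f,g:E\to\mathbb R$ are continuous and bounded; $\mu(f)=\int f\,d\mu$. Stopping times may be infinite. *)

theory Defs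
  imports "HOL-Probability.Probability"
begin

definition tv_dist :: "'a measure \<Rightarrow> 'a measure \<Rightarrow> real" where
  "tv_dist M N = (SUP A\<in>sets M. \<bar>measure M A - measure N A\<bar>)"

definition is_filtration :: "'w measure \<Rightarrow> (real \<Rightarrow> 'w measure) \<Rightarrow> bool" where
  "is_filtration M F \<longleftrightarrow>
     (\<forall>t. space (F t) = space M \<and> sets (F t) \<subseteq> sets M) \<and>
     (\<forall>s t. 0 \<le> s \<longrightarrow> s \<le> t \<longrightarrow> sets (F s) \<subseteq> sets (F t))"

definition stopping_time_ext :: "'w measure \<Rightarrow> (real \<Rightarrow> 'w measure) \<Rightarrow> ('w \<Rightarrow> ereal) \<Rightarrow> bool" where
  "stopping_time_ext M F \<tau> \<longleftrightarrow>
     (\<forall>\<omega>. 0 \<le> \<tau> \<omega>) \<and>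
     (\<forall>t\<ge>0. {\<omega>\<in>space M. \<tau> \<omega> \<le> ereal t} \<in> sets (F t))"

definition trans_prob :: "('e \<Rightarrow> 'w measure) \<Rightarrow> (real \<Rightarrow> 'w \<Rightarrow> 'e::topological_space)
    \<Rightarrow> real \<Rightarrow> 'e \<Rightarrow> 'e measure" where
  "trans_prob P X t x = distr (P x) borel (X t)"

definition rc_markov_process ::
  "'w measure \<Rightarrow> (real \<Rightarrow> 'w measure) \<Rightarrow> ('e::topological_space \<Rightarrow> 'w measure)
     \<Rightarrow> (real \<Rightarrow> 'w \<Rightarrow> 'e) \<Rightarrow> bool" where
  "rc_markov_process M F P X \<longleftrightarrow>
     is_filtration M F \<and>
     (\<forall>x. prob_space (P x) \<and> sets (P x) = sets M) \<and>
     (\<forall>t\<ge>0. X t \<in> measurable (F t) borel) \<and>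
     (\<forall>\<omega>\<in>space M. \<forall>t\<ge>0. continuous (at_right t) (\<lambda>s. X s \<omega>)) \<and>
     (\<forall>x. AE \<omega> in P x. X 0 \<omega> = x) \<and>
     (\<forall>s\<ge>0. \<forall>A\<in>sets borel. (\<lambda>y. measure (P y) {\<omega>\<in>space M. X s \<omega> \<in> A}) \<in> borel_measurable borel) \<and>
     (\<forall>x s t A B. 0 \<le> s \<longrightarrow> 0 \<le> t \<longrightarrow> A \<in> sets borel \<longrightarrow> B \<in> sets (F t) \<longrightarrow>
        measure (P x) (B \<inter> {\<omega>\<in>space M. X (t + s) \<omega> \<in> A}) =
        (\<integral>\<omega>. indicator B \<omega> * measure (P (X t \<omega>)) {\<omega>'\<in>space M. X s \<omega>' \<in> A} \<partial>P x))"

definition ergodic_with :: "('e \<Rightarrow> 'w measure) \<Rightarrow> (real \<Rightarrow> 'w \<Rightarrow> 'e::topological_space)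
    \<Rightarrow> 'e measure \<Rightarrow> bool" where
  "ergodic_with P X \<mu> \<longleftrightarrow> prob_space \<mu> \<and> sets \<mu> = sets borel \<and>
     (\<forall>x. ((\<lambda>t. tv_dist (trans_prob P X t x) \<mu>) \<longlongrightarrow> 0) at_top)"

definition reward :: "('e \<Rightarrow> 'w measure) \<Rightarrow> (real \<Rightarrow> 'w \<Rightarrow> 'e) \<Rightarrow> ('e \<Rightarrow> real) \<Rightarrow> ('e \<Rightarrow> real)
    \<Rightarrow> 'e \<Rightarrow> ('w \<Rightarrow> ereal) \<Rightarrow> real \<Rightarrow> real" where
  "reward P X f g x \<tau> T =
     (\<integral>\<omega>. (LBINT s=0..real_of_ereal (min (\<tau> \<omega>) (ereal T)). f (X s \<omega>))
           + g (X (real_of_ereal (min (\<tau> \<omega>) (ereal T))) \<omega>) \<partial>P x)"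

definition stop_value where
  "stop_value P X f g x \<tau> = Limsup at_top (\<lambda>T. ereal (reward P X f g x \<tau> T))"

definition value_fun where
  "value_fun M F P X f g x = (SUP \<tau>\<in>{\<tau>. stopping_time_ext M F \<tau>}. stop_value P X f g x \<tau>)"

end

theory Submission
  imports Defs
begin

(* Ergodicity in total variation gives E^x f(X_t) --> mu(f) for every bounded measurable f:
   integrate a staircase approximation of f against P_t(x,.) - mu. As mu(f) > 0, Fubini shows that
   the expected running reward E^x int_0^T f(X_s) ds eventually grows linearly in T, while
   E^x g(X_T) stays bounded, so never stopping has value infinity. A stopping time that is a.s.
   infinite has the same expected reward as never stopping at every horizon T. *)

section \<open>Total variation and integrals\<close>

lemma staircase_bounds:
  fixes a h v :: real and N :: nat
  assumes "0 \<le> h" "a \<le> v" "v \<le> a + N * h"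
  defines "n \<equiv> card {k\<in>{1..N}. a + k * h \<le> v}"
  shows "a + h * n \<le> v" and "v \<le> a + h * n + h"
proof -
  have "a + h * n \<le> v \<and> v \<le> a + h * n + h"
  proof (cases "h = 0")
    case True
    then show ?thesis using assms by simp
  next
    case False
    then have h: "h > 0" using assms(1) by simp
    define j where "j = min N (nat \<lfloor>(v - a) / h\<rfloor>)"
    have fl: "0 \<le> \<lfloor>(v - a) / h\<rfloor>" using h assms by simp
    have "{k\<in>{1..N}. a + k * h \<le> v} = {1..j}"
      using h fl by (auto simp: j_def le_floor_iff le_nat_iff field_simps)
    then have n: "n = j" by (simp add: n_def)
    have "int j \<le> \<lfloor>(v - a) / h\<rfloor>" using fl by (simp add: j_def min_def le_nat_iff)
    then have "j * h \<le> v - a" using h by (simp add: le_floor_iff field_simps)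
    moreover have "v - a \<le> j * h + h"
    proof (cases "j = N")
      case True then show ?thesis using assms h by simp
    next
      case False
      then have "j = \<lfloor>(v - a) / h\<rfloor>" using fl by (auto simp: j_def)
      then have "(v - a) / h \<le> j + 1" by linarith
      then show ?thesis using h by (simp add: field_simps)
    qed
    ultimately show ?thesis by (simp add: n algebra_simps)
  qed
  then show "a + h * n \<le> v" "v \<le> a + h * n + h" by auto
qed

lemma integral_const_add_sum_indicator:
  fixes K :: "nat set"
  assumes "prob_space \<rho>" "finite K" "\<And>k. k \<in> K \<Longrightarrow> A k \<in> sets \<rho>"
  shows "integrable \<rho> (\<lambda>y. a + (\<Sum>k\<in>K. c k * indicator (A k) y))"
    and "(\<integral>y. a + (\<Sum>k\<in>K. c k * indicator (A k) y) \<partial>\<rho>) = a + (\<Sum>k\<in>K. c k * measure \<rho> (A k))"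
proof -
  interpret prob_space \<rho> by fact
  have ind: "integrable \<rho> (\<lambda>y. c k * indicator (A k) y)" if "k \<in> K" for k
    using assms(3)[OF that] by (intro integrable_mult_right integrable_real_indicator)
      (auto simp: emeasure_finite less_top[symmetric])
  then show "integrable \<rho> (\<lambda>y. a + (\<Sum>k\<in>K. c k * indicator (A k) y))" by auto
  then show "(\<integral>y. a + (\<Sum>k\<in>K. c k * indicator (A k) y) \<partial>\<rho>) = a + (\<Sum>k\<in>K. c k * measure \<rho> (A k))"
    using ind assms(3) by (simp add: Bochner_Integration.integral_add integral_sum prob_space)
qed

lemma measure_diff_le_tv_dist:
  assumes "prob_space \<nu>" "prob_space \<mu>" "sets \<nu> = sets \<mu>" "A \<in> sets \<mu>"
  shows "measure \<mu> A - measure \<nu> A \<le> tv_dist \<nu> \<mu>"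
proof -
  have "measure \<mu> A - measure \<nu> A \<le> \<bar>measure \<nu> A - measure \<mu> A\<bar>" by simp
  also have "\<dots> \<le> tv_dist \<nu> \<mu>"
    unfolding tv_dist_def
  proof (rule cSUP_upper)
    show "A \<in> sets \<nu>" using assms by simp
    have "\<bar>measure \<nu> B - measure \<mu> B\<bar> \<le> 1" for B
      using prob_space.prob_le_1[OF assms(1), of B] prob_space.prob_le_1[OF assms(2), of B]
        measure_nonneg[of \<nu> B] measure_nonneg[of \<mu> B] by linarith
    then show "bdd_above ((\<lambda>B. \<bar>measure \<nu> B - measure \<mu> B\<bar>) ` sets \<nu>)"
      by (intro bdd_aboveI2)
  qed
  finally show ?thesis .
qed

lemma integral_le_integral_add_tv_dist_staircase:
  fixes f :: "'a \<Rightarrow> real" and N :: nat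
  assumes \<nu>: "prob_space \<nu>" and \<mu>: "prob_space \<mu>" and sets_eq: "sets \<nu> = sets \<mu>"
    and f: "f \<in> borel_measurable \<mu>" "\<And>y. a \<le> f y \<and> f y \<le> b" and "N > 0"
  shows "(\<integral>y. f y \<partial>\<mu>) \<le> (\<integral>y. f y \<partial>\<nu>) + (b - a) * tv_dist \<nu> \<mu> + (b - a) / N"
proof -
  define h where "h = (b - a) / N"
  have "0 \<le> h" using f(2)[of undefined] by (simp add: h_def)
  have b: "b = a + N * h" using \<open>N > 0\<close> by (simp add: h_def)
  define A where "A k = {y \<in> space \<mu>. a + k * h \<le> f y}" for k :: nat
  have A: "A k \<in> sets \<mu>" for k unfolding A_def using f(1) by measurable
  \<comment> \<open>\<open>G\<close> is the lower staircase approximation of \<open>f\<close> with step \<open>h\<close>: a combination of the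
    indicators of the superlevel sets \<open>A k\<close>, on each of which \<open>\<mu>\<close> and \<open>\<nu>\<close> differ by at most the
    total variation distance.\<close>
  define G where "G y = a + (\<Sum>k\<in>{1..N}. h * indicator (A k) y)" for y
  have G_le: "G y \<le> f y" and le_G: "f y \<le> G y + h" if "y \<in> space \<mu>" for y
  proof -
    have "G y = a + h * card {k\<in>{1..N}. a + k * h \<le> f y}"
      using that by (simp add: G_def A_def indicator_def sum.If_cases Int_def)
    then show "G y \<le> f y" "f y \<le> G y + h"
      using staircase_bounds[OF \<open>0 \<le> h\<close>, of a "f y" N] f(2)[of y] b by auto
  qed
  have G_integral: "integrable \<rho> G" "(\<integral>y. G y \<partial>\<rho>) = a + (\<Sum>k\<in>{1..N}. h * measure \<rho> (A k))"
    if "prob_space \<rho>" "sets \<rho> = sets \<mu>" for \<rho>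
  proof -
    have "A k \<in> sets \<rho>" for k using A that(2) by simp
    then show "integrable \<rho> G" "(\<integral>y. G y \<partial>\<rho>) = a + (\<Sum>k\<in>{1..N}. h * measure \<rho> (A k))"
      unfolding G_def by (simp_all only: integral_const_add_sum_indicator[OF that(1) finite_atLeastAtMost])
  qed
  have "\<bar>f y\<bar> \<le> \<bar>a\<bar> + \<bar>b\<bar>" for y using f(2)[of y] by arith
  then have f_integrable: "integrable \<rho> f" if "prob_space \<rho>" "sets \<rho> = sets \<mu>" for \<rho>
    using f that
    by (intro finite_measure.integrable_const_bound[OF prob_space.finite_measure,
          where B="\<bar>a\<bar> + \<bar>b\<bar>"]) (auto cong: measurable_cong_sets)
  interpret \<mu>: prob_space \<mu> by fact
  have "(\<integral>y. f y \<partial>\<mu>) \<le> (\<integral>y. G y + h \<partial>\<mu>)"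
    using le_G G_integral(1)[OF \<mu>] by (intro integral_mono f_integrable \<mu>) auto
  also have "\<dots> = (\<integral>y. G y \<partial>\<mu>) + h"
    using G_integral(1)[OF \<mu>] by (simp add: \<mu>.prob_space)
  also have "\<dots> = a + (\<Sum>k\<in>{1..N}. h * measure \<nu> (A k))
      + (\<Sum>k\<in>{1..N}. h * (measure \<mu> (A k) - measure \<nu> (A k))) + h"
    using G_integral(2)[OF \<mu>] by (simp add: sum_subtractf algebra_simps)
  also have "(\<Sum>k\<in>{1..N}. h * (measure \<mu> (A k) - measure \<nu> (A k))) \<le> (\<Sum>k\<in>{1..N}. h * tv_dist \<nu> \<mu>)"
    using A by (intro sum_mono mult_left_mono measure_diff_le_tv_dist \<nu> \<mu> sets_eq \<open>0 \<le> h\<close>)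
  also have "a + (\<Sum>k\<in>{1..N}. h * measure \<nu> (A k)) \<le> (\<integral>y. f y \<partial>\<nu>)"
    unfolding G_integral(2)[OF \<nu> sets_eq, symmetric]
    using G_le sets_eq_imp_space_eq[OF sets_eq]
    by (intro integral_mono f_integrable G_integral \<nu> sets_eq) auto
  finally show ?thesis using \<open>N > 0\<close> by (simp add: b)
qed

lemma integral_le_integral_add_tv_dist:
  fixes f :: "'a \<Rightarrow> real"
  assumes "prob_space \<nu>" "prob_space \<mu>" "sets \<nu> = sets \<mu>"
    and "f \<in> borel_measurable \<mu>" "\<And>y. a \<le> f y \<and> f y \<le> b"
  shows "(\<integral>y. f y \<partial>\<mu>) \<le> (\<integral>y. f y \<partial>\<nu>) + (b - a) * tv_dist \<nu> \<mu>"
proof (rule field_le_epsilon)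
  fix e :: real assume "0 < e"
  have "a \<le> b" using assms(5)[of undefined] by simp
  obtain N :: nat where "(b - a) / e < N" using reals_Archimedean2 by blast
  then have "b - a < e * N" using \<open>0 < e\<close> by (simp add: field_simps)
  then have "0 < e * N" using \<open>a \<le> b\<close> by linarith
  then have "N > 0" using \<open>0 < e\<close> by (simp add: zero_less_mult_iff)
  with \<open>b - a < e * N\<close> have "(b - a) / N \<le> e" by (simp add: pos_divide_le_eq)
  then show "(\<integral>y. f y \<partial>\<mu>) \<le> (\<integral>y. f y \<partial>\<nu>) + (b - a) * tv_dist \<nu> \<mu> + e"
    using integral_le_integral_add_tv_dist_staircase[OF assms \<open>N > 0\<close>] by linarith
qed

section \<open>Measurability of right-continuous processes\<close>

lemma dyadic_ceiling_LIMSEQ: "(\<lambda>n::nat. \<lceil>2^n * s\<rceil> / 2^n) \<longlonglongrightarrow> (s::real)"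
proof (rule tendsto_sandwich[of "\<lambda>n. s" _ _ "\<lambda>n. s + (1/2)^n"])
  show "\<forall>\<^sub>F n in sequentially. s \<le> \<lceil>2^n * s\<rceil> / 2^n"
    by (auto simp: field_simps)
  have "\<lceil>2^n * s\<rceil> \<le> 2^n * s + 1" for n :: nat by linarith
  then show "\<forall>\<^sub>F n in sequentially. \<lceil>2^n * s\<rceil> / 2^n \<le> s + (1/2)^n"
    by (simp add: field_simps power_divide)
  show "(\<lambda>n. s + (1/2::real)^n) \<longlonglongrightarrow> s"
    using tendsto_add[OF tendsto_const LIMSEQ_realpow_zero[of "1/2::real"]] by simp
qed simp

text \<open>The time is clamped at \<open>0\<close> since the process is only assumed measurable at nonnegative
  times; the proof approximates each time from the right by dyadic times.\<close>

lemma borel_measurable_right_continuous_process: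
  fixes X :: "real \<Rightarrow> 'w \<Rightarrow> 'e::metric_space"
  assumes X: "\<And>t. t \<ge> 0 \<Longrightarrow> X t \<in> borel_measurable M"
    and right_cont: "\<And>\<omega> t. \<omega> \<in> space M \<Longrightarrow> t \<ge> 0 \<Longrightarrow> continuous (at_right t) (\<lambda>s. X s \<omega>)"
  shows "(\<lambda>(\<omega>, s). X (max 0 s) \<omega>) \<in> borel_measurable (M \<Otimes>\<^sub>M (lborel :: real measure))"
proof (rule borel_measurable_LIMSEQ_metric)
  define Y where "Y n k \<omega> = X (max 0 (k / 2^n)) \<omega>" for n :: nat and k :: int and \<omega>
  show "(\<lambda>z. Y n \<lceil>(2::real)^n * max 0 (snd z)\<rceil> (fst z))
      \<in> borel_measurable (M \<Otimes>\<^sub>M (lborel :: real measure))" for n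
  proof (rule measurable_compose_countable[where f="\<lambda>k z. Y n k (fst z)"])
    show "(\<lambda>z. Y n k (fst z)) \<in> borel_measurable (M \<Otimes>\<^sub>M (lborel :: real measure))" for k
      unfolding Y_def by (intro measurable_compose[OF measurable_fst X]) simp
  qed (rule measurable_compose[OF _ measurable_real_ceiling], simp)
  fix z assume "z \<in> space (M \<Otimes>\<^sub>M (lborel :: real measure))"
  then obtain \<omega> s where z: "z = (\<omega>, s)" "\<omega> \<in> space M" by (auto simp: space_pair_measure)
  let ?s = "max 0 s"
  have dyadic_ge: "x \<le> \<lceil>2^n * x\<rceil> / 2^n" for x :: real and n :: nat
    by (simp add: field_simps)
  have "continuous (at ?s within {?s..}) (\<lambda>t. X t \<omega>)"
    using right_cont[OF z(2)] by (simp add: at_within_Ici_at_right)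
  moreover have "\<lceil>2^n * ?s\<rceil> / 2^n \<in> {?s..}" for n :: nat
    using dyadic_ge[of ?s n] by simp
  ultimately have "(\<lambda>n::nat. X (\<lceil>2^n * ?s\<rceil> / 2^n) \<omega>) \<longlonglongrightarrow> X ?s \<omega>"
    using dyadic_ceiling_LIMSEQ[of ?s] unfolding continuous_within_sequentially comp_def by auto
  moreover have "max 0 (\<lceil>2^n * ?s\<rceil> / 2^n) = \<lceil>2^n * ?s\<rceil> / 2^n" for n :: nat
    using dyadic_ge[of ?s n] by (simp add: max_absorb2)
  ultimately show "(\<lambda>n. Y n \<lceil>(2::real)^n * max 0 (snd z)\<rceil> (fst z))
      \<longlonglongrightarrow> (\<lambda>(\<omega>, s). X (max 0 s) \<omega>) z"
    by (simp add: z Y_def)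
qed

lemma interval_integral_0_eq_integral_indicator:
  fixes G :: "real \<Rightarrow> real" and u :: real
  assumes "0 \<le> u"
  shows "(LBINT s=0..u. G s) = (\<integral>s. indicator {0..u} s * G (max 0 s) \<partial>lborel)"
proof -
  have "(LBINT s=0..u. G s) = (LBINT s:{0..u}. G s)"
    using interval_integral_Icc[of 0 u G] assms by (simp add: zero_ereal_def)
  also have "\<dots> = (\<integral>s. indicator {0..u} s * G (max 0 s) \<partial>lborel)"
    unfolding set_lebesgue_integral_def
    by (intro Bochner_Integration.integral_cong) (auto simp: indicator_def)
  finally show ?thesis .
qed

lemma borel_measurable_stopped_reward:
  fixes X :: "real \<Rightarrow> 'w \<Rightarrow> 'e::metric_space" and f g :: "'e \<Rightarrow> real"
  assumes X: "\<And>t. t \<ge> 0 \<Longrightarrow> X t \<in> borel_measurable M"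
    and right_cont: "\<And>\<omega> t. \<omega> \<in> space M \<Longrightarrow> t \<ge> 0 \<Longrightarrow> continuous (at_right t) (\<lambda>s. X s \<omega>)"
    and f: "f \<in> borel_measurable borel" and g: "g \<in> borel_measurable borel"
    and u: "u \<in> borel_measurable M" "\<And>\<omega>. 0 \<le> u \<omega>"
  shows "(\<lambda>\<omega>. (LBINT s=0..u \<omega>. f (X s \<omega>)) + g (X (u \<omega>) \<omega>)) \<in> borel_measurable M"
proof -
  note X_joint = borel_measurable_right_continuous_process[OF X right_cont]
  have [measurable]: "(\<lambda>z. f (X (max 0 (snd z)) (fst z))) \<in> borel_measurable (M \<Otimes>\<^sub>M lborel)"
    using measurable_compose[OF X_joint f] by (simp add: case_prod_beta')
  have [measurable]: "u \<in> borel_measurable M" by (fact u(1))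
  then have u_lborel: "u \<in> M \<rightarrow>\<^sub>M lborel" by simp
  have "(\<lambda>(\<omega>, s). indicator {0..u \<omega>} s * f (X (max 0 s) \<omega>)) \<in> borel_measurable (M \<Otimes>\<^sub>M lborel)"
    unfolding case_prod_beta' indicator_def atLeastAtMost_iff by measurable
  then have "(\<lambda>\<omega>. \<integral>s. indicator {0..u \<omega>} s * f (X (max 0 s) \<omega>) \<partial>lborel) \<in> borel_measurable M"
    by (intro lborel.borel_measurable_lebesgue_integral) (simp add: case_prod_beta')
  then have "(\<lambda>\<omega>. LBINT s=0..u \<omega>. f (X s \<omega>)) \<in> borel_measurable M"
    by (simp add: interval_integral_0_eq_integral_indicator u(2))
  moreover have "(\<lambda>\<omega>. g (X (max 0 (u \<omega>)) \<omega>)) \<in> borel_measurable M"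
    using measurable_compose[OF measurable_Pair[OF measurable_ident_sets[OF refl] u_lborel]
        measurable_compose[OF X_joint g]] by simp
  ultimately show ?thesis using u(2) by (simp add: max_absorb2)
qed

lemma real_of_ereal_min_le_iff:
  fixes x :: ereal and T a :: real
  assumes "0 \<le> x" "0 \<le> T"
  shows "real_of_ereal (min x (ereal T)) \<le> a \<longleftrightarrow> 0 \<le> a \<and> (T \<le> a \<or> x \<le> ereal a)"
  using assms by (cases x) (auto simp: min_def)

lemma borel_measurable_stopping_time_min:
  assumes "stopping_time_ext M F \<tau>" "\<And>t. sets (F t) \<subseteq> sets M" "0 \<le> T"
  shows "(\<lambda>\<omega>. real_of_ereal (min (\<tau> \<omega>) (ereal T))) \<in> borel_measurable M"
proof (rule borel_measurableI_le)
  fix a :: real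
  have nonneg: "0 \<le> \<tau> \<omega>" for \<omega>
    using assms(1) by (simp add: stopping_time_ext_def)
  have "{\<omega> \<in> space M. real_of_ereal (min (\<tau> \<omega>) (ereal T)) \<le> a} =
      (if a < 0 then {} else if T \<le> a then space M else {\<omega> \<in> space M. \<tau> \<omega> \<le> ereal a})"
    using real_of_ereal_min_le_iff[OF nonneg assms(3)] by auto
  moreover have "{\<omega> \<in> space M. \<tau> \<omega> \<le> ereal a} \<in> sets M" if "0 \<le> a"
    using assms(1) assms(2)[of a] that unfolding stopping_time_ext_def by blast
  ultimately show "{\<omega> \<in> space M. real_of_ereal (min (\<tau> \<omega>) (ereal T)) \<le> a} \<in> sets M"
    by simp
qed

section \<open>Expected rewards\<close>

lemma tendsto_integral_of_tv_dist:
  fixes f :: "'a \<Rightarrow> real"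
  assumes \<nu>: "\<forall>\<^sub>F t in F. prob_space (\<nu> t) \<and> sets (\<nu> t) = sets \<mu>" and \<mu>: "prob_space \<mu>"
    and f: "f \<in> borel_measurable \<mu>" "\<And>y. \<bar>f y\<bar> \<le> B"
    and tv: "((\<lambda>t. tv_dist (\<nu> t) \<mu>) \<longlongrightarrow> 0) F"
  shows "((\<lambda>t. \<integral>y. f y \<partial>\<nu> t) \<longlongrightarrow> (\<integral>y. f y \<partial>\<mu>)) F"
proof -
  have "\<forall>\<^sub>F t in F. \<bar>(\<integral>y. f y \<partial>\<nu> t) - (\<integral>y. f y \<partial>\<mu>)\<bar> \<le> 2 * B * tv_dist (\<nu> t) \<mu>"
    using \<nu>
  proof eventually_elim
    case (elim t)
    have bounds: "- B \<le> f y \<and> f y \<le> B" "- B \<le> - f y \<and> - f y \<le> B" for y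
      using f(2)[of y] by auto
    have "(\<integral>y. f y \<partial>\<mu>) \<le> (\<integral>y. f y \<partial>\<nu> t) + 2 * B * tv_dist (\<nu> t) \<mu>"
      using integral_le_integral_add_tv_dist[of "\<nu> t" \<mu> f "- B" B] elim \<mu> f(1) bounds(1) by simp
    moreover have "(\<integral>y. - f y \<partial>\<mu>) \<le> (\<integral>y. - f y \<partial>\<nu> t) + 2 * B * tv_dist (\<nu> t) \<mu>"
      using integral_le_integral_add_tv_dist[of "\<nu> t" \<mu> "\<lambda>y. - f y" "- B" B] elim \<mu> f(1) bounds(2)
      by simp
    ultimately show ?case by simp
  qed
  moreover have "((\<lambda>t. 2 * B * tv_dist (\<nu> t) \<mu>) \<longlongrightarrow> 0) F"
    using tendsto_mult_right_zero[OF tv] by simp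
  ultimately have "((\<lambda>t. (\<integral>y. f y \<partial>\<nu> t) - (\<integral>y. f y \<partial>\<mu>)) \<longlongrightarrow> 0) F"
    by (auto intro: Lim_null_comparison)
  then show ?thesis by (rule LIM_zero_cancel)
qed

lemma integral_time_integral_swap:
  fixes X :: "real \<Rightarrow> 'w \<Rightarrow> 'e::metric_space" and f :: "'e \<Rightarrow> real"
  assumes Q: "prob_space Q" and X: "\<And>t. t \<ge> 0 \<Longrightarrow> X t \<in> borel_measurable Q"
    and right_cont: "\<And>\<omega> t. \<omega> \<in> space Q \<Longrightarrow> t \<ge> 0 \<Longrightarrow> continuous (at_right t) (\<lambda>s. X s \<omega>)"
    and f: "f \<in> borel_measurable borel" "\<And>y. \<bar>f y\<bar> \<le> B" and "0 \<le> (T::real)"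
  shows "integrable Q (\<lambda>\<omega>. LBINT s=0..T. f (X s \<omega>))"
    and "integrable lborel (\<lambda>s. indicator {0..T} s * (\<integral>\<omega>. f (X (max 0 s) \<omega>) \<partial>Q))"
    and "(\<integral>\<omega>. (LBINT s=0..T. f (X s \<omega>)) \<partial>Q)
      = (\<integral>s. indicator {0..T} s * (\<integral>\<omega>. f (X (max 0 s) \<omega>) \<partial>Q) \<partial>lborel)"
proof -
  interpret Q: prob_space Q by fact
  interpret pair_sigma_finite Q lborel ..
  define H where "H \<omega> s = indicator {0..T} s * f (X (max 0 s) \<omega>)" for \<omega> s
  have "(\<lambda>z. f (X (max 0 (snd z)) (fst z))) \<in> borel_measurable (Q \<Otimes>\<^sub>M lborel)"
    using measurable_compose[OF borel_measurable_right_continuous_process[OF X right_cont] f(1)]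
    by (simp add: case_prod_beta')
  then have H_measurable: "case_prod H \<in> borel_measurable (Q \<Otimes>\<^sub>M lborel)"
    unfolding H_def case_prod_beta' by measurable
  have "emeasure (Q \<Otimes>\<^sub>M lborel) (space Q \<times> {0..T}) < \<infinity>"
    using \<open>0 \<le> T\<close> by (simp add: lborel.emeasure_pair_measure_Times Q.emeasure_space_1)
  then have bound: "integrable (Q \<Otimes>\<^sub>M lborel) (\<lambda>z. B * indicator (space Q \<times> {0..T}) z)"
    by (intro integrable_mult_right integrable_real_indicator) auto
  have "\<bar>f y\<bar> \<le> \<bar>B\<bar>" for y
    using f(2)[of y] by simp
  then have H_integrable: "integrable (Q \<Otimes>\<^sub>M lborel) (case_prod H)"
    by (intro Bochner_Integration.integrable_bound[OF bound H_measurable])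
      (auto simp: H_def indicator_def space_pair_measure abs_mult intro!: AE_I2)
  have inner: "(\<integral>s. indicator {0..T} s * f (X (max 0 s) \<omega>) \<partial>lborel) = (LBINT s=0..T. f (X s \<omega>))"
    for \<omega>
    by (simp add: interval_integral_0_eq_integral_indicator \<open>0 \<le> T\<close>)
  show "integrable Q (\<lambda>\<omega>. LBINT s=0..T. f (X s \<omega>))"
    using integrable_fst[OF H_integrable] by (simp add: H_def inner)
  show "integrable lborel (\<lambda>s. indicator {0..T} s * (\<integral>\<omega>. f (X (max 0 s) \<omega>) \<partial>Q))"
    using integrable_snd[OF H_integrable] by (simp add: H_def)
  show "(\<integral>\<omega>. (LBINT s=0..T. f (X s \<omega>)) \<partial>Q)
      = (\<integral>s. indicator {0..T} s * (\<integral>\<omega>. f (X (max 0 s) \<omega>) \<partial>Q) \<partial>lborel)"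
    using Fubini_integral[OF H_integrable] by (simp add: H_def inner[symmetric])
qed

lemma integral_indicator_ge_two_phase:
  fixes m :: "real \<Rightarrow> real"
  assumes "integrable lborel (\<lambda>s. indicator {0..T} s * m s)" "0 \<le> S" "S \<le> T" "0 \<le> B"
    and "\<And>s. 0 \<le> s \<Longrightarrow> s \<le> S \<Longrightarrow> - B \<le> m s" and "\<And>s. S \<le> s \<Longrightarrow> s \<le> T \<Longrightarrow> a \<le> m s"
  shows "a * (T - S) - B * S \<le> (\<integral>s. indicator {0..T} s * m s \<partial>lborel)"
proof -
  define low where "low s = a * indicator {S..T} s - B * indicator {0..S} s" for s :: real
  have "integrable lborel low"
    unfolding low_def by (intro Bochner_Integration.integrable_diff integrable_mult_right
        integrable_real_indicator) (auto simp: emeasure_lborel_Icc_eq)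
  moreover have "low s \<le> indicator {0..T} s * m s" for s
    using assms(2-4) assms(5,6)[of s] by (auto simp: low_def indicator_def)
  ultimately have "(\<integral>s. low s \<partial>lborel) \<le> (\<integral>s. indicator {0..T} s * m s \<partial>lborel)"
    using assms(1) by (intro integral_mono)
  moreover have "(\<integral>s. low s \<partial>lborel) = a * (T - S) - B * S"
    unfolding low_def using assms(2,3)
    by (subst Bochner_Integration.integral_diff)
      (auto intro!: integrable_real_indicator simp: emeasure_lborel_Icc_eq)
  ultimately show ?thesis by simp
qed

lemma filterlim_expected_reward_at_top:
  fixes X :: "real \<Rightarrow> 'w \<Rightarrow> 'e::metric_space" and f g :: "'e \<Rightarrow> real"
  assumes Q: "prob_space Q" and X: "\<And>t. t \<ge> 0 \<Longrightarrow> X t \<in> borel_measurable Q"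
    and right_cont: "\<And>\<omega> t. \<omega> \<in> space Q \<Longrightarrow> t \<ge> 0 \<Longrightarrow> continuous (at_right t) (\<lambda>s. X s \<omega>)"
    and f: "f \<in> borel_measurable borel" "\<And>y. \<bar>f y\<bar> \<le> B"
    and g: "g \<in> borel_measurable borel" "\<And>y. \<bar>g y\<bar> \<le> C"
    and rate: "((\<lambda>t. \<integral>\<omega>. f (X t \<omega>) \<partial>Q) \<longlongrightarrow> c) at_top" "0 < c"
  shows "filterlim (\<lambda>T. \<integral>\<omega>. (LBINT s=0..T. f (X s \<omega>)) + g (X T \<omega>) \<partial>Q) at_top at_top"
proof -
  interpret Q: prob_space Q by fact
  have "B \<ge> 0" using f(2)[of undefined] by simp
  have mean_ge: "- D \<le> (\<integral>\<omega>. h (X t \<omega>) \<partial>Q)" and integrable: "integrable Q (\<lambda>\<omega>. h (X t \<omega>))"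
    if "h \<in> borel_measurable borel" "\<And>y. \<bar>h y\<bar> \<le> D" "0 \<le> t" for h :: "'e \<Rightarrow> real" and D t
  proof -
    show integrable: "integrable Q (\<lambda>\<omega>. h (X t \<omega>))"
      using that X[OF \<open>0 \<le> t\<close>] by (intro Q.integrable_const_bound[where B=D]) auto
    have "(\<integral>\<omega>. - D \<partial>Q) \<le> (\<integral>\<omega>. h (X t \<omega>) \<partial>Q)"
      using that(2) by (intro integral_mono integrable) (auto simp: abs_le_iff minus_le_iff)
    then show "- D \<le> (\<integral>\<omega>. h (X t \<omega>) \<partial>Q)" by (simp add: Q.prob_space)
  qed
  have "\<forall>\<^sub>F t in at_top. c / 2 < (\<integral>\<omega>. f (X t \<omega>) \<partial>Q)"
    using order_tendstoD(1)[OF rate(1), of "c / 2"] \<open>0 < c\<close> by linarith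
  then obtain S where "0 \<le> S" and rate_ge: "\<And>t. S \<le> t \<Longrightarrow> c / 2 \<le> (\<integral>\<omega>. f (X t \<omega>) \<partial>Q)"
    unfolding eventually_at_top_linorder by (metis less_imp_le max.cobounded2 max.boundedE)
  have reward_ge: "c / 2 * (T - S) - B * S - C \<le> (\<integral>\<omega>. (LBINT s=0..T. f (X s \<omega>)) + g (X T \<omega>) \<partial>Q)"
    if "S \<le> T" for T
  proof -
    have "0 \<le> T" using \<open>0 \<le> S\<close> that by linarith
    note swap = integral_time_integral_swap[OF Q X right_cont f this, simplified]
    have "c / 2 * (T - S) - B * S \<le> (\<integral>\<omega>. (LBINT s=0..T. f (X s \<omega>)) \<partial>Q)"
      unfolding swap(3)
      using \<open>0 \<le> S\<close> that \<open>B \<ge> 0\<close> swap(2) mean_ge[OF f] rate_ge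
      by (intro integral_indicator_ge_two_phase) auto
    moreover have "- C \<le> (\<integral>\<omega>. g (X T \<omega>) \<partial>Q)"
      using mean_ge[OF g] \<open>0 \<le> S\<close> that by simp
    ultimately show ?thesis
      using swap(1) integrable[OF g] \<open>0 \<le> S\<close> that by simp
  qed
  have "filterlim (\<lambda>T. (- c / 2 * S - B * S - C) + c / 2 * T) at_top at_top"
    using \<open>0 < c\<close> by (intro filterlim_tendsto_add_at_top[OF tendsto_const]
        filterlim_tendsto_pos_mult_at_top[OF tendsto_const _ filterlim_ident]) simp
  then show ?thesis
    by (rule filterlim_at_top_mono)
      (use reward_ge in \<open>auto simp: algebra_simps eventually_at_top_linorder\<close>)
qed

lemma rc_markov_processD:
  assumes "rc_markov_process M F P X"
  shows "prob_space (P x)" "sets (P x) = sets M" "sets (F t) \<subseteq> sets M"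
    and "t \<ge> 0 \<Longrightarrow> X t \<in> borel_measurable M"
    and "\<omega> \<in> space M \<Longrightarrow> t \<ge> 0 \<Longrightarrow> continuous (at_right t) (\<lambda>s. X s \<omega>)"
proof -
  show "prob_space (P x)" "sets (P x) = sets M" "sets (F t) \<subseteq> sets M"
    "\<omega> \<in> space M \<Longrightarrow> t \<ge> 0 \<Longrightarrow> continuous (at_right t) (\<lambda>s. X s \<omega>)"
    using assms unfolding rc_markov_process_def is_filtration_def by auto
  show "t \<ge> 0 \<Longrightarrow> X t \<in> borel_measurable M"
    using assms measurable_mono[of borel borel "F t" M]
    unfolding rc_markov_process_def is_filtration_def by auto
qed

lemma stop_value_cong_AE:
  fixes X :: "real \<Rightarrow> 'w \<Rightarrow> 'e::metric_space" and f g :: "'e \<Rightarrow> real"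
  assumes markov: "rc_markov_process M F P X"
    and f: "f \<in> borel_measurable borel" and g: "g \<in> borel_measurable borel"
    and \<tau>: "stopping_time_ext M F \<tau>" and \<sigma>: "stopping_time_ext M F \<sigma>"
    and AE_eq: "AE \<omega> in P x. \<tau> \<omega> = \<sigma> \<omega>"
  shows "stop_value P X f g x \<tau> = stop_value P X f g x \<sigma>"
proof -
  note process = rc_markov_processD[OF markov]
  define I where "I \<rho> T \<omega> = (LBINT s=0..real_of_ereal (min (\<rho> \<omega>) (ereal T)). f (X s \<omega>))
    + g (X (real_of_ereal (min (\<rho> \<omega>) (ereal T))) \<omega>)" for \<rho> :: "'w \<Rightarrow> ereal" and T \<omega>
  have I_measurable: "I \<rho> T \<in> borel_measurable (P x)" if "stopping_time_ext M F \<rho>" "0 \<le> T" for \<rho> T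
  proof -
    have "0 \<le> \<rho> \<omega>" for \<omega>
      using that(1) by (simp add: stopping_time_ext_def)
    then have "0 \<le> real_of_ereal (min (\<rho> \<omega>) (ereal T))" for \<omega>
      using that(2) by (intro real_of_ereal_pos) simp
    with borel_measurable_stopping_time_min[OF that(1) process(3) that(2)]
    have "I \<rho> T \<in> borel_measurable M"
      unfolding I_def by (intro borel_measurable_stopped_reward[OF process(4,5) f g])
    then show ?thesis
      using measurable_cong_sets[OF process(2) refl] by blast
  qed
  have "reward P X f g x \<tau> T = reward P X f g x \<sigma> T" if "0 \<le> T" for T
  proof -
    have "AE \<omega> in P x. I \<tau> T \<omega> = I \<sigma> T \<omega>"
      using AE_eq by eventually_elim (simp add: I_def)
    then show ?thesis
      using integral_cong_AE[OF I_measurable[OF \<tau> that] I_measurable[OF \<sigma> that]]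
      unfolding reward_def I_def by blast
  qed
  then have "\<forall>\<^sub>F T in at_top. ereal (reward P X f g x \<tau> T) = ereal (reward P X f g x \<sigma> T)"
    unfolding eventually_at_top_linorder by (auto intro!: exI[of _ 0])
  then show ?thesis
    unfolding stop_value_def by (rule Limsup_eq)
qed

lemma tendsto_expectation_of_ergodic:
  fixes f :: "'e::topological_space \<Rightarrow> real"
  assumes markov: "rc_markov_process M F P X" and ergodic: "ergodic_with P X \<mu>"
    and f: "f \<in> borel_measurable borel" "\<And>y. \<bar>f y\<bar> \<le> B"
  shows "((\<lambda>t. \<integral>\<omega>. f (X t \<omega>) \<partial>P x) \<longlongrightarrow> (\<integral>y. f y \<partial>\<mu>)) at_top"
proof -
  note process = rc_markov_processD[OF markov]
  have X: "X t \<in> borel_measurable (P x)" if "t \<ge> 0" for t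
    using process(4)[OF that] process(2) by (simp cong: measurable_cong_sets)
  have \<mu>: "prob_space \<mu>" "sets \<mu> = sets borel"
    and tv: "((\<lambda>t. tv_dist (distr (P x) borel (X t)) \<mu>) \<longlongrightarrow> 0) at_top"
    using ergodic unfolding ergodic_with_def trans_prob_def by auto
  have "\<forall>\<^sub>F t in at_top. prob_space (distr (P x) borel (X t)) \<and> sets (distr (P x) borel (X t)) = sets \<mu>"
    unfolding eventually_at_top_linorder using prob_space.prob_space_distr[OF process(1) X] \<mu>(2)
    by (auto intro!: exI[of _ 0])
  then have "((\<lambda>t. \<integral>y. f y \<partial>distr (P x) borel (X t)) \<longlongrightarrow> (\<integral>y. f y \<partial>\<mu>)) at_top"
    using \<mu> f tv by (intro tendsto_integral_of_tv_dist) (auto cong: measurable_cong_sets)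
  moreover have "\<forall>\<^sub>F t in at_top. (\<integral>y. f y \<partial>distr (P x) borel (X t)) = (\<integral>\<omega>. f (X t \<omega>) \<partial>P x)"
    using eventually_ge_at_top[of 0] by eventually_elim (simp add: integral_distr X f)
  ultimately show ?thesis
    by (rule Lim_transform_eventually)
qed

lemma stop_value_never_stop:
  fixes X :: "real \<Rightarrow> 'w \<Rightarrow> 'e::metric_space" and f g :: "'e \<Rightarrow> real"
  assumes markov: "rc_markov_process M F P X" and ergodic: "ergodic_with P X \<mu>"
    and f: "f \<in> borel_measurable borel" "\<And>y. \<bar>f y\<bar> \<le> B"
    and g: "g \<in> borel_measurable borel" "\<And>y. \<bar>g y\<bar> \<le> C"
    and "0 < (\<integral>y. f y \<partial>\<mu>)"
  shows "stop_value P X f g x (\<lambda>_. \<infinity>) = \<infinity>"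
proof -
  note process = rc_markov_processD[OF markov]
  have X: "X t \<in> borel_measurable (P x)" if "t \<ge> 0" for t
    using process(4)[OF that] process(2) by (simp cong: measurable_cong_sets)
  have right_cont: "continuous (at_right t) (\<lambda>s. X s \<omega>)" if "\<omega> \<in> space (P x)" "t \<ge> 0" for \<omega> t
    using process(5) that sets_eq_imp_space_eq[OF process(2)] by simp
  have "filterlim (\<lambda>T. \<integral>\<omega>. (LBINT s=0..T. f (X s \<omega>)) + g (X T \<omega>) \<partial>P x) at_top at_top"
    by (rule filterlim_expected_reward_at_top[OF process(1) X right_cont f g
          tendsto_expectation_of_ergodic[OF markov ergodic f] \<open>0 < (\<integral>y. f y \<partial>\<mu>)\<close>])
  then have "filterlim (\<lambda>T. reward P X f g x (\<lambda>_. \<infinity>) T) at_top at_top"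
    by (simp add: reward_def)
  then show ?thesis
    unfolding stop_value_def by (intro lim_imp_Limsup) (simp_all add: tendsto_PInfty_eq_at_top)
qed

theorem lemma2p2:
  fixes M :: "'w measure" and F :: "real \<Rightarrow> 'w measure"
    and P :: "'e::{heine_borel, second_countable_topology} \<Rightarrow> 'w measure"
    and X :: "real \<Rightarrow> 'w \<Rightarrow> 'e" and \<mu> :: "'e measure"
    and f g :: "'e \<Rightarrow> real"
  assumes "rc_markov_process M F P X"
    and "ergodic_with P X \<mu>"
    and "continuous_on UNIV f" and "bounded (range f)"
    and "continuous_on UNIV g" and "bounded (range g)"
    and "(\<integral>y. f y \<partial>\<mu>) > 0"
  shows "\<forall>x. value_fun M F P X f g x = \<infinity> \<and>
           (\<forall>\<tau>. stopping_time_ext M F \<tau> \<longrightarrow> (AE \<omega> in P x. \<tau> \<omega> = \<infinity>) \<longrightarrow>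
                 stop_value P X f g x \<tau> = value_fun M F P X f g x)"
proof (intro allI conjI impI)
  fix x
  have f: "f \<in> borel_measurable borel" and g: "g \<in> borel_measurable borel"
    using assms(3,5) by (simp_all add: borel_measurable_continuous_onI)
  obtain B C where B: "\<And>y. \<bar>f y\<bar> \<le> B" and C: "\<And>y. \<bar>g y\<bar> \<le> C"
    using assms(4,6) unfolding bounded_iff by auto
  have never_stop: "stop_value P X f g x (\<lambda>_. \<infinity>) = \<infinity>"
    by (rule stop_value_never_stop[OF assms(1,2) f B g C assms(7)])
  have never_stop_time: "stopping_time_ext M F (\<lambda>_. \<infinity>)"
    by (simp add: stopping_time_ext_def)
  have "\<infinity> \<le> value_fun M F P X f g x"
    unfolding value_fun_def using never_stop never_stop_time by (intro SUP_upper2[of "\<lambda>_. \<infinity>"]) simp_all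
  then show value_infinite: "value_fun M F P X f g x = \<infinity>"
    by simp
  fix \<tau> assume "stopping_time_ext M F \<tau>" "AE \<omega> in P x. \<tau> \<omega> = \<infinity>"
  then have "stop_value P X f g x \<tau> = stop_value P X f g x (\<lambda>_. \<infinity>)"
    by (rule stop_value_cong_AE[OF assms(1) f g _ never_stop_time])
  then show "stop_value P X f g x \<tau> = value_fun M F P X f g x"
    using never_stop value_infinite by simp
qed

end
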